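(* For every $\epsilon>0$ and every integer $d\ge 2$ there exist $\mathbf{w}_1,\dots,\mathbf{w}_n\in\mathbb{S}^{d-1}$ and $v_1,\dots,v_n\in\mathbb{R}$ with $|v_i|\le 1/n$, where $n=\lceil 36/\epsilon^2\rceil$, such that the network $N(\mathbf{x})=\sum_{i=1}^{n}v_i\exp(\mathbf{w}_i^\top\mathbf{x})$ satisfies $$\sup_{\mathbf{x}\in B_d}\big|N(\mathbf{x})-F_d(\|\mathbf{x}\|)\big|\le\epsilon .$$
   Context: $\|\cdot\|$ is the Euclidean norm, $B_d$ the closed unit ball and $\mathbb{S}^{d-1}$ the unit sphere in $\mathbb{R}^d$. For an integer $k\ge0$, $k!!=\prod_{i=0}^{\lceil k/2\rceil-1}(k-2i)$ (so $0!!=1$). For $z\in[0,1]$, $F_d(z)=\sum_{k=0}^{\infty}\frac{(d-2)!!}{(2k)!!\,(d+2k-2)!!}z^{2k}$. *)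

theory Defs
  imports "HOL-Analysis.Analysis"
begin

definition dfact :: "nat \<Rightarrow> nat" where
  "dfact k = (\<Prod>i<(k + 1) div 2. k - 2 * i)"

definition F :: "nat \<Rightarrow> real \<Rightarrow> real" where
  "F d z = (\<Sum>k. real (dfact (d - 2)) / (real (dfact (2 * k)) * real (dfact (d + 2 * k - 2))) * z ^ (2 * k))"

text \<open>Vectors in R^d represented as functions nat => real; only coordinates < d matter.\<close>
definition dinner :: "nat \<Rightarrow> (nat \<Rightarrow> real) \<Rightarrow> (nat \<Rightarrow> real) \<Rightarrow> real" where
  "dinner d x y = (\<Sum>j<d. x j * y j)"

definition dnorm :: "nat \<Rightarrow> (nat \<Rightarrow> real) \<Rightarrow> real" where
  "dnorm d x = sqrt (dinner d x x)"

end

theory Submission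
  imports Defs
begin

text \<open>For \<open>u\<close> uniform on the unit sphere, \<open>E exp \<langle>u, x\<rangle> = F\<^sub>d(\<parallel>x\<parallel>)\<close>: the coefficients of \<open>F\<^sub>d\<close> are
  the even moments \<open>E \<langle>u, x\<rangle>\<^sup>2\<^sup>k = (2k-1)!! \<parallel>x\<parallel>\<^sup>2\<^sup>k / (d (d+2) \<cdots> (d+2k-2))\<close> divided by \<open>(2k)!\<close>.
  The proof avoids the uniform measure itself. First, by induction on the dimension, writing a point
  of the sphere as \<open>(cos \<theta> \<bullet> v, sin \<theta>)\<close> and discretising the latitude \<open>\<theta>\<close> by midpoint sums with
  weights \<open>\<propto> cos\<^sup>m \<theta>\<close>, one obtains finitely supported distributions on the sphere whose moments up
  to any given degree are arbitrarily close to the uniform ones; truncating the exponential series,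
  such a distribution \<open>Q\<close> satisfies \<open>|E\<^sub>Q exp \<langle>u, x\<rangle> - F\<^sub>d(\<parallel>x\<parallel>)| \<le> \<epsilon>/2\<close> on the ball.
  Second, \<open>exp \<langle>a, b\<rangle>\<close> is a positive semidefinite kernel, so kernel herding selects \<open>n\<close> points of the
  support of \<open>Q\<close> whose empirical average approximates \<open>E\<^sub>Q exp \<langle>u, x\<rangle>\<close> uniformly in \<open>x\<close> with error
  at most \<open>\<surd>(e \<cdot> e / n) \<le> 3 / \<surd>n \<le> \<epsilon>/2\<close>.\<close>

section \<open>Finitely supported distributions\<close>

definition expect :: "(real \<times> 'a) list \<Rightarrow> ('a \<Rightarrow> real) \<Rightarrow> real" where
  "expect Q f = (\<Sum>p\<leftarrow>Q. fst p * f (snd p))"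

definition distr_list :: "(real \<times> 'a) list \<Rightarrow> bool" where
  "distr_list Q \<longleftrightarrow> (\<forall>p\<in>set Q. 0 \<le> fst p) \<and> (\<Sum>p\<leftarrow>Q. fst p) = 1"

lemma expect_Nil [simp]: "expect [] f = 0"
  by (simp add: expect_def)

lemma expect_Cons [simp]: "expect (p # Q) f = fst p * f (snd p) + expect Q f"
  by (simp add: expect_def)

lemma expect_append [simp]: "expect (Q @ R) f = expect Q f + expect R f"
  by (simp add: expect_def)

lemma expect_concat: "expect (concat Qs) f = (\<Sum>Q\<leftarrow>Qs. expect Q f)"
  by (induction Qs) auto

lemma expect_map: "expect (map (\<lambda>p. (c * fst p, h (snd p))) Q) f = c * expect Q (\<lambda>v. f (h v))"
  by (induction Q) (auto simp: algebra_simps)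

lemma expect_zero [simp]: "expect Q (\<lambda>u. 0) = 0"
  by (induction Q) auto

lemma expect_add: "expect Q (\<lambda>u. f u + g u) = expect Q f + expect Q g"
  by (induction Q) (auto simp: algebra_simps)

lemma expect_diff: "expect Q (\<lambda>u. f u - g u) = expect Q f - expect Q g"
  by (induction Q) (auto simp: algebra_simps)

lemma expect_cmult: "expect Q (\<lambda>u. c * f u) = c * expect Q f"
  by (induction Q) (auto simp: algebra_simps)

lemma expect_sum: "expect Q (\<lambda>u. \<Sum>i\<in>I. f i u) = (\<Sum>i\<in>I. expect Q (f i))"
  by (induction Q) (auto simp: sum_distrib_left sum.distrib)

lemma expect_swap: "expect Q (\<lambda>u. expect R (f u)) = expect R (\<lambda>v. expect Q (\<lambda>u. f u v))"
  by (induction Q) (auto simp: expect_add expect_cmult)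

lemma expect_sums: "(\<And>u. (\<lambda>n. f n u) sums g u) \<Longrightarrow> (\<lambda>n. expect Q (f n)) sums expect Q g"
  by (induction Q) (auto intro!: sums_add sums_mult)

lemma expect_mono:
  "(\<And>p. p \<in> set Q \<Longrightarrow> 0 \<le> fst p) \<Longrightarrow> (\<And>p. p \<in> set Q \<Longrightarrow> f (snd p) \<le> g (snd p))
    \<Longrightarrow> expect Q f \<le> expect Q g"
  by (induction Q) (auto intro!: add_mono mult_left_mono)

lemma expect_const:
  assumes "distr_list Q"
  shows "expect Q (\<lambda>u. c) = c"
proof -
  have "expect Q (\<lambda>u. c) = c * (\<Sum>p\<leftarrow>Q. fst p)"
    by (induction Q) (auto simp: algebra_simps)
  with assms show ?thesis
    by (simp add: distr_list_def)
qed

lemma expect_abs_le: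
  assumes Q: "distr_list Q" and f: "\<And>p. p \<in> set Q \<Longrightarrow> \<bar>f (snd p)\<bar> \<le> B"
  shows "\<bar>expect Q f\<bar> \<le> B"
proof -
  have "- B \<le> f (snd p) \<and> f (snd p) \<le> B" if "p \<in> set Q" for p
    using f[OF that] by linarith
  then have "expect Q (\<lambda>u. - B) \<le> expect Q f" "expect Q f \<le> expect Q (\<lambda>u. B)"
    using Q by (auto intro!: expect_mono simp: distr_list_def)
  then show ?thesis
    using expect_const[OF Q] by (simp add: abs_le_iff)
qed

lemma distr_list_ex_le_expect:
  assumes Q: "distr_list Q"
  shows "\<exists>p\<in>set Q. f (snd p) \<le> expect Q f"
proof -
  define c where "c = Min ((\<lambda>p. f (snd p)) ` set Q)"
  have "set Q \<noteq> {}"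
    using Q by (auto simp: distr_list_def)
  then have "c \<in> (\<lambda>p. f (snd p)) ` set Q"
    unfolding c_def by (intro Min_in) auto
  then obtain p where p: "p \<in> set Q" "f (snd p) = c"
    by auto
  have "c = expect Q (\<lambda>u. c)"
    using expect_const[OF Q] by simp
  also have "\<dots> \<le> expect Q f"
    using Q by (intro expect_mono) (auto simp: distr_list_def c_def)
  finally show ?thesis
    using p by auto
qed

lemma expect_map_weights: "expect (map (\<lambda>p. (fst p * c (snd p), snd p)) Q) f = expect Q (\<lambda>u. c u * f u)"
  by (induction Q) (auto simp: mult_ac)

section \<open>Positive semidefinite kernels and herding\<close>

text \<open>\<open>kform k L M\<close> is the inner product of the embeddings \<open>\<Sum> a\<^sub>i k(x\<^sub>i, \<cdot>)\<close> and \<open>\<Sum> b\<^sub>j k(y\<^sub>j, \<cdot>)\<close> of the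
  weighted lists \<open>L\<close>, \<open>M\<close> in the feature space of \<open>k\<close>.\<close>

definition kform :: "('a \<Rightarrow> 'a \<Rightarrow> real) \<Rightarrow> (real \<times> 'a) list \<Rightarrow> (real \<times> 'a) list \<Rightarrow> real" where
  "kform k L M = expect L (\<lambda>a. expect M (k a))"

definition psd_kernel :: "('a \<Rightarrow> 'a \<Rightarrow> real) \<Rightarrow> bool" where
  "psd_kernel k \<longleftrightarrow> (\<forall>a b. k a b = k b a) \<and> (\<forall>L. 0 \<le> kform k L L)"

lemma kform_append_left [simp]: "kform k (L @ L') M = kform k L M + kform k L' M"
  by (simp add: kform_def)

lemma kform_append_right [simp]: "kform k L (M @ M') = kform k L M + kform k L M'"
  by (simp add: kform_def expect_add)

lemma kform_singleton [simp]: "kform k [(s, a)] [(t, b)] = s * t * k a b"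
  by (simp add: kform_def)

lemma kform_cmult: "kform (\<lambda>a b. c * k a b) L M = c * kform k L M"
  by (simp add: kform_def expect_cmult)

lemma kform_sum: "kform (\<lambda>a b. \<Sum>i\<in>I. k i a b) L M = (\<Sum>i\<in>I. kform (k i) L M)"
  by (simp add: kform_def expect_sum)

lemma kform_commute:
  assumes "\<And>a b. k a b = k b a"
  shows "kform k L M = kform k M L"
  unfolding kform_def by (subst expect_swap) (simp add: assms)

lemma psd_kernel_diag_nonneg: "psd_kernel k \<Longrightarrow> 0 \<le> k x x"
  unfolding psd_kernel_def by (metis kform_singleton mult_1)

lemma quadratic_nonneg_imp_square_le:
  fixes a b c :: real
  assumes quad: "\<And>t. 0 \<le> c + 2 * t * b + t\<^sup>2 * a" and a: "0 \<le> a"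
  shows "b\<^sup>2 \<le> a * c"
proof (cases "a = 0")
  case True
  have "b = 0"
  proof (rule ccontr)
    assume "b \<noteq> 0"
    then show False
      using quad[of "- (c + 1) / (2 * b)"] True by (simp add: field_simps)
  qed
  with True quad[of 0] show ?thesis
    by simp
next
  case False
  with a have a: "0 < a"
    by simp
  have "0 \<le> c + 2 * (- b / a) * b + (- b / a)\<^sup>2 * a"
    by (rule quad)
  also have "\<dots> = c - b\<^sup>2 / a"
    using a by (simp add: power2_eq_square field_simps)
  finally show ?thesis
    using a by (simp add: field_simps)
qed

lemma kform_Cauchy_Schwarz:
  assumes k: "psd_kernel k"
  shows "(kform k L [(1, x)])\<^sup>2 \<le> k x x * kform k L L"
proof (rule quadratic_nonneg_imp_square_le[OF _ psd_kernel_diag_nonneg[OF k]])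
  fix t
  have sym: "\<And>a b. k a b = k b a"
    using k by (simp add: psd_kernel_def)
  have "kform k [(t, x)] L = t * kform k L [(1, x)]"
    unfolding kform_commute[of k L, OF sym] by (simp add: kform_def)
  moreover have "kform k L [(t, x)] = t * kform k L [(1, x)]"
    by (simp add: kform_def expect_cmult)
  moreover have "0 \<le> kform k (L @ [(t, x)]) (L @ [(t, x)])"
    using k unfolding psd_kernel_def by blast
  ultimately show "0 \<le> kform k L L + 2 * t * kform k L [(1, x)] + t\<^sup>2 * k x x"
    by (simp add: power2_eq_square algebra_simps)
qed

definition herd_residual :: "(real \<times> 'a) list \<Rightarrow> 'a list \<Rightarrow> (real \<times> 'a) list" where
  "herd_residual Q ws = concat (map (\<lambda>w. (1, w) # map (\<lambda>p. (- fst p, snd p)) Q) ws)"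

lemma expect_neg_weights: "expect (map (\<lambda>p. (- fst p, snd p)) Q) f = - expect Q f"
  by (induction Q) auto

lemma expect_herd_residual:
  "expect (herd_residual Q ws) f = (\<Sum>w\<leftarrow>ws. f w) - real (length ws) * expect Q f"
  by (induction ws) (auto simp: herd_residual_def expect_neg_weights algebra_simps)

text \<open>Kernel herding adds the support point of \<open>Q\<close> that keeps the residual \<open>\<Sum>\<^sub>i (\<delta>\<^bsub>w\<^sub>i\<^esub> - Q)\<close> short:
  averaged over \<open>w \<sim> Q\<close>, its squared norm grows by \<open>E\<^sub>Q k(u, u) - kform k Q Q \<le> E\<^sub>Q k(u, u)\<close>.\<close>

lemma herding_step:
  assumes k: "psd_kernel k" and Q: "distr_list Q"
  shows "\<exists>p\<in>set Q. kform k (herd_residual Q (ws @ [snd p])) (herd_residual Q (ws @ [snd p]))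
           \<le> kform k (herd_residual Q ws) (herd_residual Q ws) + expect Q (\<lambda>u. k u u)"
proof -
  have sym: "\<And>a b. k a b = k b a"
    using k by (simp add: psd_kernel_def)
  define A where "A = herd_residual Q ws"
  define D where "D w = (1, w) # map (\<lambda>p. (- fst p, snd p)) Q" for w
  define f where "f w = kform k (A @ D w) (A @ D w)" for w
  have DA: "kform k (D w) A = kform k A (D w)" for w
    by (rule kform_commute[OF sym])
  have AD: "kform k A (D w) = expect A (\<lambda>a. k a w) - kform k A Q" for w
    by (simp add: D_def kform_def expect_neg_weights expect_diff)
  have "expect Q (\<lambda>a. k a w) = expect Q (k w)" for w
    by (intro arg_cong[where f="expect Q"] ext sym)
  then have DD: "kform k (D w) (D w) = k w w - 2 * expect Q (k w) + kform k Q Q" for w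
    by (simp add: D_def kform_def expect_neg_weights expect_diff)
  have "expect Q f = kform k A A + 2 * (expect Q (\<lambda>w. expect A (\<lambda>a. k a w)) - kform k A Q)
      + expect Q (\<lambda>u. k u u) - 2 * kform k Q Q + kform k Q Q"
    unfolding f_def kform_append_left kform_append_right DA AD DD
    by (simp add: expect_add expect_diff expect_cmult expect_const[OF Q] kform_def algebra_simps)
  also have "expect Q (\<lambda>w. expect A (\<lambda>a. k a w)) = kform k A Q"
    unfolding kform_def by (rule expect_swap[symmetric])
  finally have "expect Q f \<le> kform k A A + expect Q (\<lambda>u. k u u)"
    using k by (simp add: psd_kernel_def)
  moreover obtain p where "p \<in> set Q" "f (snd p) \<le> expect Q f"
    using distr_list_ex_le_expect[OF Q] by blast
  moreover have "herd_residual Q (ws @ [w]) = A @ D w" for w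
    by (simp add: herd_residual_def A_def D_def)
  ultimately show ?thesis
    by (intro bexI[of _ p]) (simp_all only: f_def A_def)
qed

lemma kernel_herding:
  assumes k: "psd_kernel k" and Q: "distr_list Q" and K: "\<And>p. p \<in> set Q \<Longrightarrow> k (snd p) (snd p) \<le> K"
  shows "\<exists>ws. length ws = n \<and> set ws \<subseteq> snd ` set Q \<and>
           kform k (herd_residual Q ws) (herd_residual Q ws) \<le> real n * K"
proof (induction n)
  case 0
  show ?case
    by (simp add: herd_residual_def kform_def)
next
  case (Suc n)
  then obtain ws where ws: "length ws = n" "set ws \<subseteq> snd ` set Q"
    "kform k (herd_residual Q ws) (herd_residual Q ws) \<le> real n * K"
    by blast
  obtain p where p: "p \<in> set Q" and step:
    "kform k (herd_residual Q (ws @ [snd p])) (herd_residual Q (ws @ [snd p]))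
       \<le> kform k (herd_residual Q ws) (herd_residual Q ws) + expect Q (\<lambda>u. k u u)"
    using herding_step[OF k Q] by blast
  have "expect Q (\<lambda>u. k u u) \<le> expect Q (\<lambda>u. K)"
    using Q K by (intro expect_mono) (auto simp: distr_list_def)
  then have "expect Q (\<lambda>u. k u u) \<le> K"
    by (simp add: expect_const[OF Q])
  then show ?case
    using ws p step by (intro exI[of _ "ws @ [snd p]"]) (auto simp: algebra_simps)
qed

lemma kernel_herding_uniform:
  assumes k: "psd_kernel k" and Q: "distr_list Q" and K: "\<And>p. p \<in> set Q \<Longrightarrow> k (snd p) (snd p) \<le> K"
    and n: "n > 0"
  shows "\<exists>ws. length ws = n \<and> set ws \<subseteq> snd ` set Q \<and>
           (\<forall>x. \<bar>(\<Sum>w\<leftarrow>ws. k w x) / real n - expect Q (\<lambda>u. k u x)\<bar> \<le> sqrt (K * k x x / real n))"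
proof -
  obtain ws where ws: "length ws = n" "set ws \<subseteq> snd ` set Q"
    and R: "kform k (herd_residual Q ws) (herd_residual Q ws) \<le> real n * K"
    using kernel_herding[OF k Q K] by blast
  have "\<bar>(\<Sum>w\<leftarrow>ws. k w x) / real n - expect Q (\<lambda>u. k u x)\<bar> \<le> sqrt (K * k x x / real n)" for x
  proof -
    have b: "kform k (herd_residual Q ws) [(1, x)] = (\<Sum>w\<leftarrow>ws. k w x) - real n * expect Q (\<lambda>u. k u x)"
      using ws(1) by (simp add: kform_def expect_herd_residual)
    have "(kform k (herd_residual Q ws) [(1, x)])\<^sup>2 \<le> k x x * (real n * K)"
      using kform_Cauchy_Schwarz[OF k] R psd_kernel_diag_nonneg[OF k]
      by (meson mult_left_mono order_trans)
    moreover have "(\<Sum>w\<leftarrow>ws. k w x) / real n - expect Q (\<lambda>u. k u x)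
        = kform k (herd_residual Q ws) [(1, x)] / real n"
      using n unfolding b by (simp add: field_simps)
    ultimately have "((\<Sum>w\<leftarrow>ws. k w x) / real n - expect Q (\<lambda>u. k u x))\<^sup>2 \<le> K * k x x / real n"
      using n by (simp add: power_divide power2_eq_square divide_right_mono field_simps)
    then show ?thesis
      by (simp add: real_le_rsqrt)
  qed
  then show ?thesis
    using ws by blast
qed

section \<open>The kernel \<open>exp \<langle>a, b\<rangle>\<close>\<close>

lemma dinner_commute: "dinner d a b = dinner d b a"
  by (simp add: dinner_def mult.commute)

lemma dinner_Suc: "dinner (Suc n) a b = dinner n a b + a n * b n"
  by (simp add: dinner_def)

lemma dinner_self_nonneg: "0 \<le> dinner n x x"
  by (simp add: dinner_def sum_nonneg)

lemma abs_dinner_le_1: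
  assumes "dinner d u u = 1" "dinner d x x \<le> 1"
  shows "\<bar>dinner d u x\<bar> \<le> 1"
proof -
  have "(dinner d u x)\<^sup>2 \<le> dinner d u u * dinner d x x"
    unfolding dinner_def using Cauchy_Schwarz_ineq_sum[of u x "{..<d}"]
    by (simp add: power2_eq_square)
  also have "\<dots> \<le> 1"
    using assms by simp
  finally show ?thesis
    by (simp add: abs_square_le_1)
qed

lemma exp_sums_real: "(\<lambda>n. x ^ n / fact n) sums exp (x :: real)"
  using exp_converges[of x] by (simp add: divide_inverse mult.commute)

lemma kform_rescale:
  "kform (\<lambda>a b. c a * c b * k a b) L L
     = kform k (map (\<lambda>p. (fst p * c (snd p), snd p)) L) (map (\<lambda>p. (fst p * c (snd p), snd p)) L)"
  by (simp add: kform_def expect_map_weights expect_cmult mult_ac)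

lemma kform_dinner_power_nonneg: "0 \<le> kform (\<lambda>a b. dinner d a b ^ j) L L"
proof (induction j arbitrary: L)
  case 0
  have "kform (\<lambda>a b. 1) L L = (expect L (\<lambda>a. 1))\<^sup>2"
    using expect_cmult[of L "expect L (\<lambda>a. 1)" "\<lambda>a. 1"] by (simp add: kform_def power2_eq_square)
  then show ?case
    by simp
next
  case (Suc j)
  \<comment> \<open>Schur product: \<open>\<langle>a, b\<rangle>\<^sup>j\<^sup>+\<^sup>1 = \<Sum>\<^sub>l a\<^sub>l b\<^sub>l \<langle>a, b\<rangle>\<^sup>j\<close> is a sum of reweighted copies of the previous kernel.\<close>
  have "kform (\<lambda>a b. dinner d a b ^ Suc j) L L
      = (\<Sum>l<d. kform (\<lambda>a b. a l * b l * dinner d a b ^ j) L L)"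
    unfolding power_Suc dinner_def[of d] sum_distrib_right by (rule kform_sum)
  also have "\<dots> \<ge> 0"
    unfolding kform_rescale[of "\<lambda>a. a _"] by (intro sum_nonneg Suc.IH)
  finally show ?case .
qed

lemma psd_kernel_exp_dinner: "psd_kernel (\<lambda>a b. exp (dinner d a b))"
  unfolding psd_kernel_def
proof (intro conjI allI)
  fix a b
  show "exp (dinner d a b) = exp (dinner d b a)"
    by (simp add: dinner_commute)
next
  fix L :: "(real \<times> (nat \<Rightarrow> real)) list"
  have sums: "(\<lambda>j. kform (\<lambda>a b. dinner d a b ^ j / fact j) L L) sums kform (\<lambda>a b. exp (dinner d a b)) L L"
    unfolding kform_def by (intro expect_sums exp_sums_real)
  have nonneg: "0 \<le> kform (\<lambda>a b. dinner d a b ^ j / fact j) L L" for j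
    using kform_cmult[of "inverse (fact j)" "\<lambda>a b. dinner d a b ^ j" L L] kform_dinner_power_nonneg[of d j L]
    by (simp add: divide_inverse mult.commute)
  show "0 \<le> kform (\<lambda>a b. exp (dinner d a b)) L L"
    using sums_le[OF nonneg sums_zero sums] by simp
qed

section \<open>Trigonometric integrals and midpoint sums\<close>

definition cos_sin_integral :: "nat \<Rightarrow> nat \<Rightarrow> real" where
  "cos_sin_integral a b = integral {-pi/2..pi/2} (\<lambda>t. cos t ^ a * sin t ^ b)"

lemma integral_real_deriv:
  assumes "a \<le> b" and "\<And>t. (f has_real_derivative f' t) (at t)"
  shows "integral {a..b} f' = f b - f a"
proof -
  have "(f' has_integral f b - f a) {a..b}"
    using assms has_field_derivative_at_within[OF assms(2)]
    by (intro fundamental_theorem_of_calculus) (simp_all add: has_real_derivative_iff_has_vector_derivative)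
  then show ?thesis
    by (rule integral_unique)
qed

lemma cos_sin_power_integrable: "(\<lambda>t::real. cos t ^ a * sin t ^ b) integrable_on {x..y}"
  by (intro integrable_continuous_real continuous_intros)

lemma cos_sin_integral_parts: "real (Suc a) * cos_sin_integral a (b + 2) = real (Suc b) * cos_sin_integral (a + 2) b"
proof -
  let ?D = "\<lambda>t. real (Suc b) * (cos t ^ (a + 2) * sin t ^ b) - real (Suc a) * (cos t ^ a * sin t ^ (b + 2))"
  have "((\<lambda>t. cos t ^ Suc a * sin t ^ Suc b) has_real_derivative ?D t) (at t)" for t
    by (rule DERIV_cong[OF DERIV_mult[OF DERIV_power_Suc[OF DERIV_cos] DERIV_power_Suc[OF DERIV_sin]]])
      (simp add: power_add power2_eq_square algebra_simps)
  then have "integral {-pi/2..pi/2} ?D = 0"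
    using integral_real_deriv[of "-pi/2" "pi/2" "\<lambda>t. cos t ^ Suc a * sin t ^ Suc b" ?D] by simp
  moreover have "integral {-pi/2..pi/2} ?D
      = real (Suc b) * cos_sin_integral (a + 2) b - real (Suc a) * cos_sin_integral a (b + 2)"
    unfolding cos_sin_integral_def
    by (subst integral_diff) (auto intro!: integrable_continuous_real continuous_intros)
  ultimately show ?thesis
    by simp
qed

lemma cos_sin_integral_split: "cos_sin_integral a b = cos_sin_integral (a + 2) b + cos_sin_integral a (b + 2)"
proof -
  have "(\<lambda>t. cos t ^ a * sin t ^ b) = (\<lambda>t::real. cos t ^ (a + 2) * sin t ^ b + cos t ^ a * sin t ^ (b + 2))"
  proof
    fix t :: real
    have "cos t ^ (a + 2) * sin t ^ b + cos t ^ a * sin t ^ (b + 2)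
        = (cos t * cos t + sin t * sin t) * (cos t ^ a * sin t ^ b)"
      by (simp only: power_add power2_eq_square) algebra
    then show "cos t ^ a * sin t ^ b = cos t ^ (a + 2) * sin t ^ b + cos t ^ a * sin t ^ (b + 2)"
      by simp
  qed
  then show ?thesis
    unfolding cos_sin_integral_def
    by (simp only:) (rule integral_add[OF cos_sin_power_integrable cos_sin_power_integrable])
qed

lemma cos_sin_integral_rec_sin: "cos_sin_integral a (b + 2) * real (a + b + 2) = real (Suc b) * cos_sin_integral a b"
  using cos_sin_integral_parts[of a b] cos_sin_integral_split[of a b] by (simp add: algebra_simps)

lemma cos_sin_integral_rec_cos: "cos_sin_integral (a + 2) b * real (a + b + 2) = real (Suc a) * cos_sin_integral a b"
  using cos_sin_integral_parts[of a b] cos_sin_integral_split[of a b] by (simp add: algebra_simps)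

lemma cos_sin_integral_odd: "cos_sin_integral a (2 * l + 1) = 0"
proof (induction l)
  case 0
  let ?D = "\<lambda>t. - real (Suc a) * (cos t ^ a * sin t ^ 1)"
  have "((\<lambda>t. cos t ^ Suc a) has_real_derivative ?D t) (at t)" for t
    by (rule DERIV_cong[OF DERIV_power_Suc[OF DERIV_cos]]) (simp add: algebra_simps)
  then have "integral {-pi/2..pi/2} ?D = 0"
    using integral_real_deriv[of "-pi/2" "pi/2" "\<lambda>t. cos t ^ Suc a" ?D] by simp
  then show ?case
    by (simp add: cos_sin_integral_def)
next
  case (Suc l)
  have "cos_sin_integral a (2 * l + 1 + 2) * real (a + (2 * l + 1) + 2) = 0"
    using cos_sin_integral_rec_sin[of a "2 * l + 1"] Suc by simp
  then have "cos_sin_integral a (2 * l + 1 + 2) = 0"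
    by (simp del: of_nat_add)
  then show ?case
    by (simp add: algebra_simps)
qed

lemma cos_sin_integral_pos: "0 < cos_sin_integral a 0"
proof (induction a rule: less_induct)
  case (less a)
  show ?case
  proof (cases "a < 2")
    case True
    have "((\<lambda>t. sin t) has_real_derivative cos t) (at t)" for t
      by (rule DERIV_sin)
    then have "cos_sin_integral 1 0 = 2"
      using integral_real_deriv[of "-pi/2" "pi/2" sin cos] by (simp add: cos_sin_integral_def)
    moreover have "cos_sin_integral 0 0 = pi"
      by (simp add: cos_sin_integral_def)
    moreover have "a = 0 \<or> a = 1"
      using True by auto
    ultimately show ?thesis
      by auto
  next
    case False
    then obtain c where c: "a = c + 2"
      by (metis add.commute le_add_diff_inverse not_less)
    then have "cos_sin_integral a 0 = real (Suc c) * cos_sin_integral c 0 / real (c + 2)"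
      using cos_sin_integral_rec_cos[of c 0] by (simp add: field_simps del: of_nat_Suc)
    then show ?thesis
      using less.IH[of c] c by simp
  qed
qed

lemma cos_sin_integral_even_cos:
  "cos_sin_integral (a + 2 * j) 0 = cos_sin_integral a 0 * (\<Prod>i<j. real (a + 2 * i + 1) / real (a + 2 * i + 2))"
proof (induction j)
  case (Suc j)
  have "cos_sin_integral (a + 2 * j + 2) 0 * real (a + 2 * j + 0 + 2) = real (Suc (a + 2 * j)) * cos_sin_integral (a + 2 * j) 0"
    by (rule cos_sin_integral_rec_cos)
  then have "cos_sin_integral (a + 2 * j + 2) 0 = cos_sin_integral (a + 2 * j) 0 * (real (a + 2 * j + 1) / real (a + 2 * j + 2))"
    by (simp add: field_simps)
  then show ?case
    using Suc by (simp add: algebra_simps)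
qed simp

lemma cos_sin_integral_even_sin:
  "cos_sin_integral a (2 * l) = cos_sin_integral a 0 * (\<Prod>i<l. real (2 * i + 1) / real (a + 2 * i + 2))"
proof (induction l)
  case (Suc l)
  have "cos_sin_integral a (2 * l + 2) * real (a + 2 * l + 2) = real (Suc (2 * l)) * cos_sin_integral a (2 * l)"
    by (rule cos_sin_integral_rec_sin)
  then have "cos_sin_integral a (2 * l + 2) = cos_sin_integral a (2 * l) * (real (2 * l + 1) / real (a + 2 * l + 2))"
    by (simp add: field_simps)
  then show ?case
    using Suc by (simp add: algebra_simps)
qed simp

lemma lipschitz_on_cos_sin_power: "(real (a + b))-lipschitz_on S (\<lambda>t::real. cos t ^ a * sin t ^ b)"
proof (rule lipschitz_onI)
  let ?D = "\<lambda>t. real a * cos t ^ (a - 1) * - sin t * sin t ^ b + cos t ^ a * (real b * sin t ^ (b - 1) * cos t)"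
  have D: "((\<lambda>t. cos t ^ a * sin t ^ b) has_field_derivative ?D t) (at t within UNIV)" for t
    by (auto intro!: derivative_eq_intros)
  have "\<bar>?D t\<bar> \<le> real (a + b)" for t
  proof -
    have "\<bar>cos t ^ (a - 1) * - sin t * sin t ^ b\<bar> \<le> 1" "\<bar>cos t ^ a * (sin t ^ (b - 1) * cos t)\<bar> \<le> 1"
      unfolding abs_mult power_abs abs_minus by (intro mult_le_one power_le_one; simp)+
    then have "\<bar>real a * cos t ^ (a - 1) * - sin t * sin t ^ b\<bar> \<le> real a"
      "\<bar>cos t ^ a * (real b * sin t ^ (b - 1) * cos t)\<bar> \<le> real b"
      by (simp_all add: abs_mult mult_left_le mult_ac)
    then show ?thesis
      using abs_triangle_ineq[of "real a * cos t ^ (a - 1) * - sin t * sin t ^ b"] by simp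
  qed
  then show "dist (cos x ^ a * sin x ^ b) (cos y ^ a * sin y ^ b) \<le> real (a + b) * dist x y" for x y :: real
    using field_differentiable_bound[OF convex_UNIV D, of "real (a + b)" x y] by (simp add: dist_real_def)
qed simp

lemma integral_lipschitz_approx:
  fixes g :: "real \<Rightarrow> real"
  assumes g: "L-lipschitz_on {c..c + h} g" and m: "m \<in> {c..c + h}"
  shows "\<bar>h * g m - integral {c..c + h} g\<bar> \<le> L * h * h"
proof -
  have h: "0 \<le> h" and L: "0 \<le> L"
    using m lipschitz_on_nonneg[OF g] by auto
  have int: "g integrable_on {c..c + h}"
    using lipschitz_on_continuous_on[OF g] by (rule integrable_continuous_real)
  have "integral {c..c + h} (\<lambda>t. g m - g t) = integral {c..c + h} (\<lambda>t. g m) - integral {c..c + h} g"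
    using int by (intro integral_diff) auto
  then have "h * g m - integral {c..c + h} g = integral {c..c + h} (\<lambda>t. g m - g t)"
    using h by (simp add: content_real)
  moreover have "norm (integral {c..c + h} (\<lambda>t. g m - g t)) \<le> integral {c..c + h} (\<lambda>t. L * h)"
  proof (rule integral_norm_bound_integral)
    show "(\<lambda>t. g m - g t) integrable_on {c..c + h}"
      using int by (intro integrable_diff) auto
    fix t
    assume t: "t \<in> {c..c + h}"
    have "\<bar>g m - g t\<bar> \<le> L * \<bar>m - t\<bar>"
      using lipschitz_onD[OF g m t] by (simp add: dist_real_def)
    also have "\<dots> \<le> L * h"
      using t m L by (intro mult_left_mono) auto
    finally show "norm (g m - g t) \<le> L * h"
      by simp
  qed auto
  ultimately show ?thesis
    using h by (simp add: content_real mult_ac)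
qed

lemma integral_uniform_cells:
  fixes g :: "real \<Rightarrow> real"
  assumes "continuous_on {a..a + real N * h} g" and "0 \<le> h"
  shows "integral {a..a + real N * h} g = (\<Sum>i<N. integral {a + real i * h..a + real (Suc i) * h} g)"
  using assms
proof (induction N)
  case (Suc N)
  have sub: "{a..a + real N * h} \<subseteq> {a..a + real (Suc N) * h}"
    using Suc.prems(2) by (auto simp: algebra_simps)
  have "integral {a..a + real N * h} g + integral {a + real N * h..a + real (Suc N) * h} g
      = integral {a..a + real (Suc N) * h} g"
    by (rule Henstock_Kurzweil_Integration.integral_combine)
      (use Suc.prems in \<open>auto intro!: integrable_continuous_real simp: algebra_simps\<close>)
  then show ?case
    using Suc.IH[OF continuous_on_subset[OF Suc.prems(1) sub] Suc.prems(2)] by simp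
qed simp

lemma midpoint_sum_error:
  fixes g :: "real \<Rightarrow> real"
  assumes ab: "a \<le> b" and N: "N > 0" and g: "L-lipschitz_on {a..b} g"
  shows "\<bar>(b - a) / real N * (\<Sum>i<N. g (a + (real i + 1/2) * ((b - a) / real N))) - integral {a..b} g\<bar>
          \<le> L * (b - a)\<^sup>2 / real N"
proof -
  define h where "h = (b - a) / real N"
  have h: "0 \<le> h" and b: "b = a + real N * h"
    using ab N by (simp_all add: h_def)
  have cell: "\<bar>h * g (a + (real i + 1/2) * h) - integral {a + real i * h..a + real (Suc i) * h} g\<bar> \<le> L * h * h"
    if "i < N" for i
  proof -
    have "real (Suc i) * h \<le> real N * h"
      using that h by (intro mult_right_mono) auto
    then have "{a + real i * h..a + real i * h + h} \<subseteq> {a..b}"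
      using h b by (auto simp: algebra_simps)
    then have "L-lipschitz_on {a + real i * h..a + real i * h + h} g"
      by (rule lipschitz_on_subset[OF g])
    moreover have "a + (real i + 1/2) * h \<in> {a + real i * h..a + real i * h + h}"
      using h by (auto simp: algebra_simps)
    ultimately have "\<bar>h * g (a + (real i + 1/2) * h) - integral {a + real i * h..a + real i * h + h} g\<bar> \<le> L * h * h"
      by (rule integral_lipschitz_approx)
    then show ?thesis
      by (simp add: algebra_simps)
  qed
  have "integral {a..b} g = (\<Sum>i<N. integral {a + real i * h..a + real (Suc i) * h} g)"
    using integral_uniform_cells[of a N h g] lipschitz_on_continuous_on[OF g] h b by simp
  then have "(b - a) / real N * (\<Sum>i<N. g (a + (real i + 1/2) * h)) - integral {a..b} g
      = (\<Sum>i<N. h * g (a + (real i + 1/2) * h) - integral {a + real i * h..a + real (Suc i) * h} g)"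
    unfolding sum_subtractf by (simp add: h_def sum_distrib_left)
  also have "\<bar>\<dots>\<bar> \<le> (\<Sum>i<N. L * h * h)"
    by (rule order_trans[OF sum_abs]) (intro sum_mono cell, simp)
  also have "\<dots> = L * (b - a)\<^sup>2 / real N"
    using N by (simp add: h_def power2_eq_square)
  finally show ?thesis
    by (simp add: h_def)
qed

lemma midpoint_sum_tendsto:
  fixes g :: "real \<Rightarrow> real"
  assumes "a \<le> b" and "L-lipschitz_on {a..b} g"
  shows "(\<lambda>N. (b - a) / real N * (\<Sum>i<N. g (a + (real i + 1/2) * ((b - a) / real N)))) \<longlonglongrightarrow> integral {a..b} g"
proof -
  have "(\<lambda>N. (b - a) / real N * (\<Sum>i<N. g (a + (real i + 1/2) * ((b - a) / real N))) - integral {a..b} g) \<longlonglongrightarrow> 0"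
  proof (rule Lim_null_comparison)
    show "\<forall>\<^sub>F N in sequentially. norm ((b - a) / real N * (\<Sum>i<N. g (a + (real i + 1/2) * ((b - a) / real N)))
        - integral {a..b} g) \<le> L * (b - a)\<^sup>2 / real N"
      using eventually_gt_at_top[of 0] by eventually_elim (use midpoint_sum_error[OF assms(1) _ assms(2)] in auto)
  qed (rule lim_const_over_n)
  then show ?thesis
    by (simp add: LIM_zero_iff)
qed

definition node :: "nat \<Rightarrow> nat \<Rightarrow> real" where
  "node N i = - (pi/2) + (real i + 1/2) * (pi / real N)"

lemma cos_sin_midpoint_tendsto:
  "(\<lambda>N. pi / real N * (\<Sum>i<N. cos (node N i) ^ a * sin (node N i) ^ b)) \<longlonglongrightarrow> cos_sin_integral a b"
  using midpoint_sum_tendsto[OF _ lipschitz_on_cos_sin_power, of "-(pi/2)" "pi/2" a b]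
  by (simp add: cos_sin_integral_def node_def)

lemma cos_node_pos:
  assumes "i < N"
  shows "0 < cos (node N i)"
proof -
  have N: "0 < real N"
    using assms by simp
  have "(real i + 1/2) * (pi / real N) < real N * (pi / real N)"
    using assms N by (intro mult_strict_right_mono) auto
  then have "0 < (real i + 1/2) * (pi / real N)" "(real i + 1/2) * (pi / real N) < pi"
    using N by simp_all
  then show ?thesis
    unfolding node_def by (intro cos_gt_zero_pi) linarith+
qed

definition node_weight :: "nat \<Rightarrow> nat \<Rightarrow> nat \<Rightarrow> real" where
  "node_weight N m i = cos (node N i) ^ m / (\<Sum>j<N. cos (node N j) ^ m)"

lemma node_weight_nonneg: "i < N \<Longrightarrow> 0 \<le> node_weight N m i"
  unfolding node_weight_def using cos_node_pos
  by (intro divide_nonneg_nonneg sum_nonneg zero_le_power) (auto intro: less_imp_le)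

lemma sum_node_weight:
  assumes "N > 0"
  shows "(\<Sum>i<N. node_weight N m i) = 1"
proof -
  have "0 < (\<Sum>j<N. cos (node N j) ^ m)"
    using assms cos_node_pos by (intro sum_pos) auto
  then show ?thesis
    unfolding node_weight_def by (simp add: sum_divide_distrib[symmetric])
qed

text \<open>The latitude \<open>\<theta> \<in> (-\<pi>/2, \<pi>/2)\<close> of a uniformly distributed point of the unit sphere
  in \<open>\<real>\<^sup>m\<^sup>+\<^sup>2\<close> has density proportional to \<open>cos\<^sup>m \<theta>\<close>; \<open>lat_moment m l k\<close> is the mean of
  \<open>cos\<^sup>l \<theta> sin\<^sup>k \<theta>\<close> under this density, and \<open>node_moment N m l k\<close> its midpoint-rule approximation.\<close>

definition lat_moment :: "nat \<Rightarrow> nat \<Rightarrow> nat \<Rightarrow> real" where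
  "lat_moment m l k = cos_sin_integral (m + l) k / cos_sin_integral m 0"

definition node_moment :: "nat \<Rightarrow> nat \<Rightarrow> nat \<Rightarrow> nat \<Rightarrow> real" where
  "node_moment N m l k = (\<Sum>i<N. node_weight N m i * (cos (node N i) ^ l * sin (node N i) ^ k))"

lemma abs_node_moment_le_1: "\<bar>node_moment N m l k\<bar> \<le> 1"
proof (cases "N = 0")
  case False
  have "\<bar>node_moment N m l k\<bar> \<le> (\<Sum>i<N. \<bar>node_weight N m i * (cos (node N i) ^ l * sin (node N i) ^ k)\<bar>)"
    unfolding node_moment_def by (rule sum_abs)
  also have "\<dots> \<le> (\<Sum>i<N. node_weight N m i)"
  proof (intro sum_mono)
    fix i
    assume "i \<in> {..<N}"
    then have "0 \<le> node_weight N m i"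
      by (intro node_weight_nonneg) auto
    moreover have "\<bar>cos (node N i) ^ l * sin (node N i) ^ k\<bar> \<le> 1"
      unfolding abs_mult power_abs by (intro mult_le_one power_le_one) auto
    ultimately show "\<bar>node_weight N m i * (cos (node N i) ^ l * sin (node N i) ^ k)\<bar> \<le> node_weight N m i"
      by (simp add: abs_mult mult_left_le)
  qed
  also have "\<dots> = 1"
    using False by (simp add: sum_node_weight)
  finally show ?thesis .
qed (simp add: node_moment_def)

lemma node_moment_tendsto: "(\<lambda>N. node_moment N m l k) \<longlonglongrightarrow> lat_moment m l k"
proof -
  let ?R = "\<lambda>a b N. pi / real N * (\<Sum>i<N. cos (node N i) ^ a * sin (node N i) ^ b)"
  have "(\<lambda>N. ?R (m + l) k N / ?R m 0 N) \<longlonglongrightarrow> lat_moment m l k"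
    unfolding lat_moment_def using cos_sin_integral_pos[of m]
    by (intro tendsto_divide cos_sin_midpoint_tendsto) auto
  moreover have "\<forall>\<^sub>F N in sequentially. ?R (m + l) k N / ?R m 0 N = node_moment N m l k"
    using eventually_gt_at_top[of 0]
    by eventually_elim (simp add: node_moment_def node_weight_def sum_divide_distrib power_add mult_ac)
  ultimately show ?thesis
    by (rule Lim_transform_eventually)
qed

lemma lat_moment_odd: "odd k \<Longrightarrow> lat_moment m l k = 0"
  using cos_sin_integral_odd[of "m + l"] by (auto simp: lat_moment_def elim!: oddE)

lemma lat_moment_even:
  "lat_moment m (2 * j) (2 * l)
     = (\<Prod>i<j. real (m + 2 * i + 1) / real (m + 2 * i + 2)) * (\<Prod>i<l. real (2 * i + 1) / real (m + 2 * j + 2 * i + 2))"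
  using cos_sin_integral_pos[of m]
  by (simp add: lat_moment_def cos_sin_integral_even_sin[of "m + 2 * j"] cos_sin_integral_even_cos)

section \<open>Moments of the uniform distribution on the sphere\<close>

definition odd_prod :: "nat \<Rightarrow> real" where
  "odd_prod j = (\<Prod>i<j. real (2 * i + 1))"

text \<open>\<open>sphere_moment n p r\<close> is the mean of \<open>\<langle>u, x\<rangle>\<^sup>p\<close> for \<open>u\<close> uniformly distributed on the unit sphere
  of \<open>\<real>\<^sup>n\<close> and \<open>\<parallel>x\<parallel> = r\<close>; for even \<open>p = 2k\<close> it is \<open>r\<^sup>2\<^sup>k (2k-1)!! / (n (n+2) \<cdots> (n+2k-2))\<close>.\<close>

definition sphere_even_moment :: "nat \<Rightarrow> nat \<Rightarrow> real" where
  "sphere_even_moment n k = (\<Prod>i<k. real (2 * i + 1) / real (n + 2 * i))"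

definition sphere_moment :: "nat \<Rightarrow> nat \<Rightarrow> real \<Rightarrow> real" where
  "sphere_moment n p r = (if even p then sphere_even_moment n (p div 2) * r ^ p else 0)"

lemma sphere_even_moment_bounds: "n \<ge> 1 \<Longrightarrow> 0 \<le> sphere_even_moment n k \<and> sphere_even_moment n k \<le> 1"
  unfolding sphere_even_moment_def by (auto intro!: prod_nonneg prod_le_1)

lemma abs_sphere_moment_le: "n \<ge> 1 \<Longrightarrow> \<bar>sphere_moment n p r\<bar> \<le> \<bar>r\<bar> ^ p"
  using sphere_even_moment_bounds[of n "p div 2"]
  by (auto simp: sphere_moment_def abs_mult power_abs intro!: mult_left_le_one_le)

lemma odd_prod_eq_fact: "odd_prod j = fact (2 * j) / (2 ^ j * fact j)"
proof -
  have "odd_prod j * 2 ^ j * fact j = fact (2 * j)"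
  proof (induction j)
    case (Suc j)
    have "odd_prod (Suc j) * 2 ^ Suc j * fact (Suc j)
        = (odd_prod j * 2 ^ j * fact j) * (real (2 * j + 1) * real (2 * j + 2))"
      by (simp add: odd_prod_def algebra_simps)
    also have "\<dots> = fact (2 * Suc j)"
      using Suc by (simp add: algebra_simps)
    finally show ?case .
  qed (simp add: odd_prod_def)
  then show ?thesis
    by (simp add: field_simps)
qed

lemma binomial_odd_prod:
  assumes "j \<le> k"
  shows "real (2 * k choose 2 * j) * odd_prod j * odd_prod (k - j) = real (k choose j) * odd_prod k"
proof -
  have "2 * k - 2 * j = 2 * (k - j)" and "(2::real) ^ k = 2 ^ j * 2 ^ (k - j)"
    using assms by (simp_all flip: power_add)
  with assms show ?thesis
    by (simp add: binomial_fact odd_prod_eq_fact)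
qed

lemma prod_lessThan_add:
  fixes f :: "nat \<Rightarrow> 'a::comm_monoid_mult"
  shows "(\<Prod>i<j + l. f i) = (\<Prod>i<j. f i) * (\<Prod>i<l. f (j + i))"
  by (induction l) (auto simp: mult_ac)

lemma sphere_even_moment_eq: "sphere_even_moment n k = odd_prod k / (\<Prod>i<k. real (n + 2 * i))"
  by (simp add: sphere_even_moment_def odd_prod_def prod_dividef)

lemma even_moment_lat_moment:
  assumes "j \<le> k"
  shows "real (2 * k choose 2 * j) * sphere_even_moment (Suc m) j * lat_moment m (2 * j) (2 * (k - j))
    = real (k choose j) * sphere_even_moment (Suc (Suc m)) k"
proof -
  define l where "l = k - j"
  have k: "k = j + l"
    using assms by (simp add: l_def)
  have "sphere_even_moment (Suc m) j * (\<Prod>i<j. real (m + 2 * i + 1) / real (m + 2 * i + 2))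
      = (\<Prod>i<j. real (2 * i + 1) / real (Suc (Suc m) + 2 * i))"
    unfolding sphere_even_moment_def prod.distrib[symmetric]
  proof (intro prod.cong refl)
    fix i
    have cancel: "a / A * (A / B) = a / B" if "A \<noteq> 0" for a A B :: real
      using that by (cases "B = 0") (simp_all add: field_simps)
    have "Suc m + 2 * i = m + 2 * i + 1" "Suc (Suc m) + 2 * i = m + 2 * i + 2"
      by simp_all
    then show "real (2 * i + 1) / real (Suc m + 2 * i) * (real (m + 2 * i + 1) / real (m + 2 * i + 2))
        = real (2 * i + 1) / real (Suc (Suc m) + 2 * i)"
      using cancel[of "real (m + 2 * i + 1)"] by (simp only: of_nat_eq_0_iff add_eq_0_iff_both_eq_0) simp
  qed
  moreover have "(\<Prod>i<j. real (2 * i + 1) / real (Suc (Suc m) + 2 * i))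
      * (\<Prod>i<l. real (2 * i + 1) / real (m + 2 * j + 2 * i + 2))
      = odd_prod j * odd_prod l / (\<Prod>i<k. real (Suc (Suc m) + 2 * i))"
    unfolding k prod_lessThan_add prod_dividef odd_prod_def by (simp add: algebra_simps)
  ultimately have "sphere_even_moment (Suc m) j * lat_moment m (2 * j) (2 * l)
      = odd_prod j * odd_prod l / (\<Prod>i<k. real (Suc (Suc m) + 2 * i))"
    unfolding lat_moment_even by (simp only: mult.assoc[symmetric])
  then have "real (2 * k choose 2 * j) * sphere_even_moment (Suc m) j * lat_moment m (2 * j) (2 * (k - j))
      = (real (2 * k choose 2 * j) * odd_prod j * odd_prod (k - j)) / (\<Prod>i<k. real (Suc (Suc m) + 2 * i))"
    by (simp add: l_def mult.assoc)
  then show ?thesis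
    unfolding binomial_odd_prod[OF assms] by (simp add: sphere_even_moment_eq)
qed

lemma sphere_moment_lat_moment_odd: "odd l \<or> odd k \<Longrightarrow> sphere_moment n l r * lat_moment m l k = 0"
  by (auto simp: sphere_moment_def lat_moment_odd)

lemma sphere_moment_lat_moment_even:
  assumes "j \<le> k"
  shows "real (2 * k choose 2 * j) * s ^ (2 * k - 2 * j) * sphere_moment (Suc m) (2 * j) r * lat_moment m (2 * j) (2 * k - 2 * j)
    = sphere_even_moment (Suc (Suc m)) k * (real (k choose j) * (r\<^sup>2) ^ j * (s\<^sup>2) ^ (k - j))"
proof -
  have e: "2 * k - 2 * j = 2 * (k - j)"
    by simp
  have "sphere_moment (Suc m) (2 * j) r = sphere_even_moment (Suc m) j * r ^ (2 * j)"
    by (simp add: sphere_moment_def)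
  then have "real (2 * k choose 2 * j) * s ^ (2 * k - 2 * j) * sphere_moment (Suc m) (2 * j) r * lat_moment m (2 * j) (2 * k - 2 * j)
      = (real (2 * k choose 2 * j) * sphere_even_moment (Suc m) j * lat_moment m (2 * j) (2 * (k - j)))
        * (r ^ (2 * j) * s ^ (2 * (k - j)))"
    unfolding e by (simp only: mult_ac)
  also have "\<dots> = sphere_even_moment (Suc (Suc m)) k * (real (k choose j) * (r\<^sup>2) ^ j * (s\<^sup>2) ^ (k - j))"
    unfolding even_moment_lat_moment[OF assms] power_mult by (simp only: mult_ac)
  finally show ?thesis .
qed

lemma sum_atMost_double:
  fixes f :: "nat \<Rightarrow> 'a::comm_monoid_add"
  shows "(\<Sum>l\<le>2 * k. f l) = (\<Sum>j\<le>k. f (2 * j)) + (\<Sum>j<k. f (2 * j + 1))"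
  by (induction k) (simp_all add: numeral_2_eq_2 ac_simps)

text \<open>Writing a uniform point of the unit sphere of \<open>\<real>\<^sup>m\<^sup>+\<^sup>2\<close> as \<open>(cos \<theta> \<bullet> v, sin \<theta>)\<close> with \<open>v\<close> uniform
  on the unit sphere of \<open>\<real>\<^sup>m\<^sup>+\<^sup>1\<close> and independent latitude \<open>\<theta>\<close>, and expanding
  \<open>(cos \<theta> \<langle>v, x\<rangle> + s sin \<theta>)\<^sup>p\<close> binomially, gives the following recursion.\<close>

lemma sphere_moment_recursion:
  assumes "0 \<le> r"
  shows "(\<Sum>l\<le>p. real (p choose l) * s ^ (p - l) * sphere_moment (Suc m) l r * lat_moment m l (p - l))
    = sphere_moment (Suc (Suc m)) p (sqrt (r\<^sup>2 + s\<^sup>2))"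
proof (cases "even p")
  case False
  have "odd l \<or> odd (p - l)" if "l \<le> p" for l
    using False that by auto
  then have "real (p choose l) * s ^ (p - l) * sphere_moment (Suc m) l r * lat_moment m l (p - l) = 0"
    if "l \<le> p" for l
    using sphere_moment_lat_moment_odd[of l "p - l"] that by (simp add: mult.assoc)
  then show ?thesis
    using False by (simp add: sum.neutral sphere_moment_def[of "Suc (Suc m)"])
next
  case True
  then obtain k where p: "p = 2 * k"
    by blast
  have "(\<Sum>l\<le>p. real (p choose l) * s ^ (p - l) * sphere_moment (Suc m) l r * lat_moment m l (p - l))
      = (\<Sum>j\<le>k. sphere_even_moment (Suc (Suc m)) k * (real (k choose j) * (r\<^sup>2) ^ j * (s\<^sup>2) ^ (k - j)))"
    using sphere_moment_lat_moment_even[of _ k s m r] unfolding p sum_atMost_double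
    by (simp add: sphere_moment_def)
  also have "\<dots> = sphere_even_moment (Suc (Suc m)) k * (r\<^sup>2 + s\<^sup>2) ^ k"
    by (simp add: binomial_ring sum_distrib_left)
  also have "\<dots> = sphere_moment (Suc (Suc m)) p (sqrt (r\<^sup>2 + s\<^sup>2))"
    by (simp add: sphere_moment_def p power_mult)
  finally show ?thesis .
qed

section \<open>Finite distributions on spheres with almost uniform moments\<close>

definition sphere_distr :: "nat \<Rightarrow> (real \<times> (nat \<Rightarrow> real)) list \<Rightarrow> bool" where
  "sphere_distr n Q \<longleftrightarrow> distr_list Q \<and> (\<forall>p\<in>set Q. dinner n (snd p) (snd p) = 1)"

definition lift_sphere :: "nat \<Rightarrow> real \<Rightarrow> (nat \<Rightarrow> real) \<Rightarrow> (nat \<Rightarrow> real)" where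
  "lift_sphere n t v = (\<lambda>j. if j < n then cos t * v j else if j = n then sin t else 0)"

definition lift_distr :: "nat \<Rightarrow> nat \<Rightarrow> (real \<times> (nat \<Rightarrow> real)) list \<Rightarrow> (real \<times> (nat \<Rightarrow> real)) list" where
  "lift_distr m N Q =
     concat (map (\<lambda>i. map (\<lambda>p. (node_weight N m i * fst p, lift_sphere (Suc m) (node N i) (snd p))) Q) [0..<N])"

lemma dinner_lift_sphere: "dinner (Suc n) (lift_sphere n t v) x = cos t * dinner n v x + sin t * x n"
  by (simp add: dinner_Suc dinner_def lift_sphere_def sum_distrib_left mult.assoc)

lemma dinner_lift_sphere_self:
  "dinner (Suc n) (lift_sphere n t v) (lift_sphere n t v) = (cos t)\<^sup>2 * dinner n v v + (sin t)\<^sup>2"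
proof -
  have "dinner n (lift_sphere n t v) (lift_sphere n t v) = (cos t)\<^sup>2 * dinner n v v"
    by (simp add: dinner_def lift_sphere_def sum_distrib_left power2_eq_square mult_ac)
  then show ?thesis
    by (simp add: dinner_Suc lift_sphere_def power2_eq_square)
qed

lemma dnorm_Suc: "dnorm (Suc n) x = sqrt ((dnorm n x)\<^sup>2 + (x n)\<^sup>2)"
  using dinner_self_nonneg[of n x] by (simp add: dnorm_def dinner_Suc power2_eq_square)

lemma expect_lift_distr:
  "expect (lift_distr m N Q) f = (\<Sum>i<N. node_weight N m i * expect Q (\<lambda>v. f (lift_sphere (Suc m) (node N i) v)))"
  by (simp add: lift_distr_def expect_concat expect_map interv_sum_list_conv_sum_set_nat atLeast0LessThan)

lemma sphere_distr_lift_distr: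
  assumes Q: "sphere_distr (Suc m) Q" and N: "N > 0"
  shows "sphere_distr (Suc (Suc m)) (lift_distr m N Q)"
proof -
  have "(\<Sum>p\<leftarrow>lift_distr m N Q. fst p) = expect (lift_distr m N Q) (\<lambda>v. 1)"
    by (simp add: expect_def)
  also have "\<dots> = (\<Sum>i<N. node_weight N m i)"
    using Q by (simp add: expect_lift_distr sphere_distr_def expect_const)
  also have "\<dots> = 1"
    using N by (rule sum_node_weight)
  finally have "(\<Sum>p\<leftarrow>lift_distr m N Q. fst p) = 1" .
  moreover have "0 \<le> fst p \<and> dinner (Suc (Suc m)) (snd p) (snd p) = 1" if "p \<in> set (lift_distr m N Q)" for p
  proof -
    from that obtain i q where i: "i < N" and q: "q \<in> set Q"
      and p: "p = (node_weight N m i * fst q, lift_sphere (Suc m) (node N i) (snd q))"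
      unfolding lift_distr_def by auto
    have "0 \<le> fst q" "dinner (Suc m) (snd q) (snd q) = 1"
      using Q q by (auto simp: sphere_distr_def distr_list_def)
    with node_weight_nonneg[OF i] show ?thesis
      using p by (simp add: dinner_lift_sphere_self)
  qed
  ultimately show ?thesis
    unfolding sphere_distr_def distr_list_def by blast
qed

lemma expect_binomial:
  "expect Q (\<lambda>v. (c * g v + d) ^ p) = (\<Sum>l\<le>p. real (p choose l) * c ^ l * d ^ (p - l) * expect Q (\<lambda>v. g v ^ l))"
proof -
  have "expect Q (\<lambda>v. (c * g v + d) ^ p)
      = expect Q (\<lambda>v. \<Sum>l\<le>p. (real (p choose l) * c ^ l * d ^ (p - l)) * g v ^ l)"
    by (simp add: binomial_ring power_mult_distrib mult_ac)
  then show ?thesis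
    by (simp only: expect_sum expect_cmult)
qed

lemma moment_lift_distr:
  "expect (lift_distr m N Q) (\<lambda>u. dinner (Suc (Suc m)) u x ^ p)
    = (\<Sum>l\<le>p. real (p choose l) * x (Suc m) ^ (p - l) * expect Q (\<lambda>v. dinner (Suc m) v x ^ l)
         * node_moment N m l (p - l))"
proof -
  have "expect (lift_distr m N Q) (\<lambda>u. dinner (Suc (Suc m)) u x ^ p)
      = (\<Sum>i<N. node_weight N m i * expect Q (\<lambda>v. (cos (node N i) * dinner (Suc m) v x + sin (node N i) * x (Suc m)) ^ p))"
    by (simp add: expect_lift_distr dinner_lift_sphere)
  also have "\<dots> = (\<Sum>i<N. \<Sum>l\<le>p. real (p choose l) * x (Suc m) ^ (p - l) * expect Q (\<lambda>v. dinner (Suc m) v x ^ l)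
          * (node_weight N m i * (cos (node N i) ^ l * sin (node N i) ^ (p - l))))"
    unfolding expect_binomial by (intro sum.cong refl) (simp add: sum_distrib_left power_mult_distrib mult_ac)
  also have "\<dots> = (\<Sum>l\<le>p. real (p choose l) * x (Suc m) ^ (p - l) * expect Q (\<lambda>v. dinner (Suc m) v x ^ l)
         * node_moment N m l (p - l))"
    by (subst sum.swap) (simp add: node_moment_def sum_distrib_left)
  finally show ?thesis .
qed

lemma abs_scaled_mult_sub_mult_le:
  fixes a b c s M :: real
  assumes "\<bar>s\<bar> \<le> 1" and "\<bar>b\<bar> \<le> 1" and "\<bar>M\<bar> \<le> 1"
  shows "\<bar>s * (a * b - M * c)\<bar> \<le> \<bar>a - M\<bar> + \<bar>b - c\<bar>"
proof -
  have "\<bar>s * (a * b - M * c)\<bar> \<le> \<bar>a * b - M * c\<bar>"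
    using assms(1) by (simp add: abs_mult mult_left_le_one_le)
  also have "\<dots> = \<bar>(a - M) * b + M * (b - c)\<bar>"
    by (simp add: algebra_simps)
  also have "\<dots> \<le> \<bar>a - M\<bar> * \<bar>b\<bar> + \<bar>M\<bar> * \<bar>b - c\<bar>"
    by (metis abs_mult abs_triangle_ineq)
  also have "\<dots> \<le> \<bar>a - M\<bar> * 1 + 1 * \<bar>b - c\<bar>"
    using assms by (intro add_mono mult_mono) auto
  finally show ?thesis
    by simp
qed

lemma dnorm_Suc_le_1D:
  assumes "dnorm (Suc n) x \<le> 1"
  shows "dnorm n x \<le> 1" and "\<bar>x n\<bar> \<le> 1"
proof -
  have "(dnorm n x)\<^sup>2 + (x n)\<^sup>2 \<le> 1"
    using assms by (simp add: dnorm_Suc)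
  then have "(dnorm n x)\<^sup>2 \<le> 1" "(x n)\<^sup>2 \<le> 1"
    by (smt (verit) zero_le_power2)+
  then show "dnorm n x \<le> 1" "\<bar>x n\<bar> \<le> 1"
    by (simp_all add: abs_square_le_1 dnorm_def dinner_self_nonneg)
qed

lemma lift_distr_moment_error:
  assumes Q: "\<And>l. l \<le> p \<Longrightarrow> dnorm (Suc m) x \<le> 1 \<Longrightarrow>
      \<bar>expect Q (\<lambda>u. dinner (Suc m) u x ^ l) - sphere_moment (Suc m) l (dnorm (Suc m) x)\<bar> \<le> \<eta>"
    and N: "\<And>l. l \<le> p \<Longrightarrow> \<bar>node_moment N m l (p - l) - lat_moment m l (p - l)\<bar> \<le> \<eta>"
    and x: "dnorm (Suc (Suc m)) x \<le> 1"
  shows "\<bar>expect (lift_distr m N Q) (\<lambda>u. dinner (Suc (Suc m)) u x ^ p)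
           - sphere_moment (Suc (Suc m)) p (dnorm (Suc (Suc m)) x)\<bar> \<le> 2 ^ p * (2 * \<eta>)"
proof -
  define r where "r = dnorm (Suc m) x"
  define s where "s = x (Suc m)"
  define A where "A l = expect Q (\<lambda>v. dinner (Suc m) v x ^ l)" for l
  define M where "M l = sphere_moment (Suc m) l r" for l
  have r: "0 \<le> r" "r \<le> 1" and s: "\<bar>s\<bar> \<le> 1"
    using dnorm_Suc_le_1D[OF x] by (simp_all add: r_def s_def dnorm_def dinner_self_nonneg)
  have rs: "dnorm (Suc (Suc m)) x = sqrt (r\<^sup>2 + s\<^sup>2)"
    by (simp add: r_def s_def dnorm_Suc)
  have summand: "\<bar>real (p choose l) * s ^ (p - l) * (A l * node_moment N m l (p - l) - M l * lat_moment m l (p - l))\<bar>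
      \<le> real (p choose l) * (2 * \<eta>)" if "l \<le> p" for l
  proof -
    have "\<bar>s ^ (p - l)\<bar> \<le> 1"
      using s by (simp add: power_abs power_le_one)
    moreover have "\<bar>M l\<bar> \<le> 1"
      using abs_sphere_moment_le[of "Suc m" l r] power_le_one[OF r, of l] r by (simp add: M_def)
    ultimately have "\<bar>s ^ (p - l) * (A l * node_moment N m l (p - l) - M l * lat_moment m l (p - l))\<bar>
        \<le> \<bar>A l - M l\<bar> + \<bar>node_moment N m l (p - l) - lat_moment m l (p - l)\<bar>"
      using abs_scaled_mult_sub_mult_le[OF _ abs_node_moment_le_1] by blast
    also have "\<dots> \<le> 2 * \<eta>"
      using Q[OF that] N[OF that] r by (simp add: A_def M_def r_def)
    finally show ?thesis
      by (simp add: abs_mult mult.assoc mult_left_mono)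
  qed
  have "expect (lift_distr m N Q) (\<lambda>u. dinner (Suc (Suc m)) u x ^ p) - sphere_moment (Suc (Suc m)) p (dnorm (Suc (Suc m)) x)
      = (\<Sum>l\<le>p. real (p choose l) * s ^ (p - l) * A l * node_moment N m l (p - l))
        - (\<Sum>l\<le>p. real (p choose l) * s ^ (p - l) * M l * lat_moment m l (p - l))"
    unfolding moment_lift_distr rs sphere_moment_recursion[OF r(1), symmetric] by (simp add: A_def M_def s_def)
  also have "\<dots> = (\<Sum>l\<le>p. real (p choose l) * s ^ (p - l) * (A l * node_moment N m l (p - l) - M l * lat_moment m l (p - l)))"
    by (simp add: sum_subtractf[symmetric] algebra_simps)
  also have "\<bar>\<dots>\<bar> \<le> (\<Sum>l\<le>p. real (p choose l) * (2 * \<eta>))"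
    by (rule order_trans[OF sum_abs]) (intro sum_mono summand, simp)
  also have "\<dots> = 2 ^ p * (2 * \<eta>)"
    by (simp flip: sum_distrib_right of_nat_sum add: choose_row_sum)
  finally show ?thesis .
qed

lemma sphere_distr_1_exact:
  "\<exists>Q. sphere_distr 1 Q \<and> (\<forall>x p. expect Q (\<lambda>u. dinner 1 u x ^ p) = sphere_moment 1 p (dnorm 1 x))"
proof -
  define Q where "Q = [(1/2 :: real, \<lambda>j::nat. 1 :: real), (1/2, \<lambda>j. -1)]"
  have "sphere_distr 1 Q"
    by (simp add: sphere_distr_def distr_list_def Q_def dinner_def)
  moreover have "expect Q (\<lambda>u. dinner 1 u x ^ p) = sphere_moment 1 p (dnorm 1 x)" for x p
  proof -
    have "expect Q (\<lambda>u. dinner 1 u x ^ p) = (x 0 ^ p + (- x 0) ^ p) / 2"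
      by (simp add: Q_def dinner_def)
    moreover have "sphere_even_moment 1 k = 1" for k
      by (simp add: sphere_even_moment_def)
    ultimately show ?thesis
      by (cases "even p") (simp_all add: sphere_moment_def dnorm_def dinner_def power_even_abs)
  qed
  ultimately show ?thesis
    by blast
qed

lemma sphere_distr_moments_approx:
  assumes "\<eta> > 0"
  shows "\<exists>Q. sphere_distr (Suc m) Q \<and> (\<forall>x p. dnorm (Suc m) x \<le> 1 \<longrightarrow> p \<le> P \<longrightarrow>
      \<bar>expect Q (\<lambda>u. dinner (Suc m) u x ^ p) - sphere_moment (Suc m) p (dnorm (Suc m) x)\<bar> \<le> \<eta>)"
  using assms
proof (induction m arbitrary: \<eta>)
  case 0
  then show ?case
    using sphere_distr_1_exact by fastforce
next
  case (Suc m)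
  define \<eta>' where "\<eta>' = \<eta> / 2 ^ Suc P"
  have \<eta>': "\<eta>' > 0"
    using Suc.prems by (simp add: \<eta>'_def)
  obtain Q where Q: "sphere_distr (Suc m) Q" and Q_moments: "\<And>x p. dnorm (Suc m) x \<le> 1 \<Longrightarrow> p \<le> P \<Longrightarrow>
      \<bar>expect Q (\<lambda>u. dinner (Suc m) u x ^ p) - sphere_moment (Suc m) p (dnorm (Suc m) x)\<bar> \<le> \<eta>'"
    using Suc.IH[OF \<eta>'] by blast
  have "\<forall>\<^sub>F N in sequentially. N > 0 \<and> (\<forall>lk\<in>{..P} \<times> {..P}. dist (node_moment N m (fst lk) (snd lk)) (lat_moment m (fst lk) (snd lk)) < \<eta>')"
    by (intro eventually_conj eventually_gt_at_top eventually_ball_finite ballI tendstoD[OF node_moment_tendsto \<eta>']) auto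
  then obtain N where N: "N > 0" and N_moments: "\<And>l k. l \<le> P \<Longrightarrow> k \<le> P \<Longrightarrow> \<bar>node_moment N m l k - lat_moment m l k\<bar> \<le> \<eta>'"
    unfolding eventually_sequentially dist_real_def
    by (metis (no_types, lifting) atMost_iff le_refl less_le mem_Sigma_iff fst_conv snd_conv)
  have "\<bar>expect (lift_distr m N Q) (\<lambda>u. dinner (Suc (Suc m)) u x ^ p)
         - sphere_moment (Suc (Suc m)) p (dnorm (Suc (Suc m)) x)\<bar> \<le> \<eta>"
    if "dnorm (Suc (Suc m)) x \<le> 1" "p \<le> P" for x p
  proof -
    have "\<bar>expect (lift_distr m N Q) (\<lambda>u. dinner (Suc (Suc m)) u x ^ p)
         - sphere_moment (Suc (Suc m)) p (dnorm (Suc (Suc m)) x)\<bar> \<le> 2 ^ p * (2 * \<eta>')"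
      using that by (intro lift_distr_moment_error Q_moments N_moments) auto
    also have "\<dots> \<le> 2 ^ P * (2 * \<eta>')"
      using that \<eta>' by (intro mult_right_mono power_increasing) auto
    also have "\<dots> = \<eta>"
      by (simp add: \<eta>'_def)
    finally show ?thesis .
  qed
  then show ?case
    using sphere_distr_lift_distr[OF Q N] by blast
qed

section \<open>The series \<open>F\<^sub>d\<close>\<close>

lemma dfact_Suc_Suc: "dfact (Suc (Suc k)) = Suc (Suc k) * dfact k"
proof -
  have "(Suc (Suc k) + 1) div 2 = Suc ((k + 1) div 2)"
    by simp
  then show ?thesis
    unfolding dfact_def by (simp only: prod.lessThan_Suc_shift) simp
qed

lemma dfact_pos: "dfact k > 0"
  unfolding dfact_def by (intro prod_pos) (auto simp: lessThan_iff)

lemma dfact_even: "real (dfact (2 * k)) = 2 ^ k * fact k"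
proof (induction k)
  case (Suc k)
  have "2 * Suc k = Suc (Suc (2 * k))"
    by simp
  then show ?case
    using Suc by (simp add: dfact_Suc_Suc algebra_simps)
qed (simp add: dfact_def)

lemma dfact_add_even:
  assumes "d \<ge> 2"
  shows "real (dfact (d + 2 * k - 2)) = real (dfact (d - 2)) * (\<Prod>i<k. real (d + 2 * i))"
proof (induction k)
  case (Suc k)
  have e: "d + 2 * Suc k - 2 = Suc (Suc (d + 2 * k - 2))" and e': "real (Suc (Suc (d + 2 * k - 2))) = real (d + 2 * k)"
    using assms by simp_all
  show ?case
    unfolding e dfact_Suc_Suc of_nat_mult e' Suc by (simp add: algebra_simps)
qed simp

lemma F_coefficient:
  assumes "d \<ge> 2"
  shows "real (dfact (d - 2)) / (real (dfact (2 * k)) * real (dfact (d + 2 * k - 2))) = sphere_even_moment d k / fact (2 * k)"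
proof -
  have "0 < real (dfact (d - 2))" "0 < (\<Prod>i<k. real (d + 2 * i))"
    using dfact_pos assms by (auto intro: prod_pos)
  then show ?thesis
    by (simp add: dfact_add_even[OF assms] dfact_even sphere_even_moment_eq odd_prod_eq_fact)
qed

lemma F_sums_sphere_moment:
  assumes d: "d \<ge> 2"
  shows "(\<lambda>p. sphere_moment d p z / fact p) sums F d z"
proof -
  define f where "f p = sphere_moment d p z / fact p" for p
  have "summable (\<lambda>p. \<bar>z\<bar> ^ p / fact p)"
    using exp_sums_real[of "\<bar>z\<bar>"] by (rule sums_summable)
  then have f: "summable f"
  proof (rule summable_comparison_test')
    show "norm (f p) \<le> \<bar>z\<bar> ^ p / fact p" for p
      using abs_sphere_moment_le[of d p z] d by (simp add: f_def abs_divide divide_right_mono)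
  qed
  have "f p = 0" if "p \<notin> range (\<lambda>k. 2 * k)" for p
    using that by (auto simp: f_def sphere_moment_def elim!: evenE)
  then have "(\<lambda>k. f (2 * k)) sums suminf f"
    using sums_mono_reindex[of "\<lambda>k. 2 * k" f] summable_sums[OF f] by (simp add: strict_mono_def)
  moreover have "f (2 * k) = real (dfact (d - 2)) / (real (dfact (2 * k)) * real (dfact (d + 2 * k - 2))) * z ^ (2 * k)" for k
    by (simp add: f_def sphere_moment_def F_coefficient[OF d])
  ultimately have "F d z = suminf f"
    unfolding F_def using sums_unique by fastforce
  then show ?thesis
    using summable_sums[OF f] by (simp add: f_def[abs_def])
qed

lemma sums_inverse_fact: "(\<lambda>p. 1 / fact p) sums exp (1 :: real)"
  using exp_sums_real[of 1] by simp

lemma exp_1_tail_small: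
  fixes e :: real
  assumes "e > 0"
  shows "\<exists>P. exp 1 - (\<Sum>p<P. 1 / fact p) \<le> e"
proof -
  have "(\<lambda>P. \<Sum>p<P. 1 / fact p) \<longlonglongrightarrow> exp (1 :: real)"
    using sums_inverse_fact by (simp add: sums_def)
  then obtain P where "dist (\<Sum>p<P. 1 / fact p) (exp (1 :: real)) < e"
    using assms by (meson LIMSEQ_iff_nz le_refl)
  then show ?thesis
    unfolding dist_real_def by (intro exI[of _ P]) linarith
qed

lemma abs_sums_le_split:
  fixes a :: "nat \<Rightarrow> real"
  assumes a: "a sums D" and head: "\<And>p. p < P \<Longrightarrow> \<bar>a p\<bar> \<le> \<eta> / fact p"
    and all: "\<And>p. \<bar>a p\<bar> \<le> 2 / fact p" and \<eta>: "0 \<le> \<eta>"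
  shows "\<bar>D\<bar> \<le> \<eta> * exp 1 + 2 * (exp 1 - (\<Sum>p<P. 1 / fact p))"
proof -
  define T :: real where "T = exp 1 - (\<Sum>p<P. 1 / fact p)"
  have tail_a: "(\<lambda>i. a (i + P)) sums (D - (\<Sum>p<P. a p))"
    using a sums_iff_shift[of a P] by simp
  have "(\<lambda>i. 1 / fact (i + P)) sums T"
    using sums_inverse_fact sums_iff_shift[of "\<lambda>p. 1 / (fact p :: real)" P] by (simp add: T_def)
  from sums_mult[OF this, of 2] have tail_e: "(\<lambda>i. 2 / fact (i + P)) sums (2 * T)"
    by simp
  have "D - (\<Sum>p<P. a p) \<le> 2 * T" "- (D - (\<Sum>p<P. a p)) \<le> 2 * T"
    using sums_le[OF _ tail_a tail_e] sums_le[OF _ sums_minus[OF tail_a] tail_e] all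
    by (auto simp: abs_le_iff)
  moreover have "\<bar>\<Sum>p<P. a p\<bar> \<le> \<eta> * exp 1"
  proof -
    have "\<bar>\<Sum>p<P. a p\<bar> \<le> (\<Sum>p<P. \<eta> / fact p)"
      by (rule order_trans[OF sum_abs]) (intro sum_mono head, simp)
    also have "\<dots> = \<eta> * (\<Sum>p<P. 1 / fact p)"
      by (simp add: sum_distrib_left)
    also have "\<dots> \<le> \<eta> * exp 1"
      using sum_le_suminf[OF sums_summable[OF sums_inverse_fact], of "{..<P}"] sums_unique[OF sums_inverse_fact] \<eta>
      by (intro mult_left_mono) auto
    finally show ?thesis .
  qed
  ultimately show ?thesis
    unfolding T_def by linarith
qed

lemma expect_exp_dinner_sums:
  "(\<lambda>p. expect Q (\<lambda>u. dinner d u x ^ p) / fact p) sums expect Q (\<lambda>u. exp (dinner d u x))"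
proof -
  have "(\<lambda>p. expect Q (\<lambda>u. dinner d u x ^ p / fact p)) sums expect Q (\<lambda>u. exp (dinner d u x))"
    by (intro expect_sums exp_sums_real)
  moreover have "expect Q (\<lambda>u. dinner d u x ^ p / fact p) = expect Q (\<lambda>u. dinner d u x ^ p) / fact p" for p
    using expect_cmult[of Q "1 / fact p" "\<lambda>u. dinner d u x ^ p"] by simp
  ultimately show ?thesis
    by simp
qed

lemma abs_expect_dinner_power_le_1:
  assumes "sphere_distr d Q" and "dinner d x x \<le> 1"
  shows "\<bar>expect Q (\<lambda>u. dinner d u x ^ p)\<bar> \<le> 1"
  using assms abs_dinner_le_1
  by (intro expect_abs_le) (auto simp: sphere_distr_def power_abs power_le_one)

lemma sphere_distr_exp_approx:
  assumes d: "d \<ge> 2" and \<delta>: "\<delta> > 0"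
  shows "\<exists>Q. sphere_distr d Q \<and>
           (\<forall>x. dnorm d x \<le> 1 \<longrightarrow> \<bar>expect Q (\<lambda>u. exp (dinner d u x)) - F d (dnorm d x)\<bar> \<le> \<delta>)"
proof -
  obtain P where tail: "exp 1 - (\<Sum>p<P. 1 / fact p) \<le> \<delta> / 4"
    using exp_1_tail_small[of "\<delta> / 4"] \<delta> by auto
  define \<eta> where "\<eta> = \<delta> / 6"
  obtain m where m: "d = Suc m"
    using d by (cases d) auto
  obtain Q where Q: "sphere_distr d Q" and Q_moments: "\<And>x p. dnorm d x \<le> 1 \<Longrightarrow> p \<le> P \<Longrightarrow>
      \<bar>expect Q (\<lambda>u. dinner d u x ^ p) - sphere_moment d p (dnorm d x)\<bar> \<le> \<eta>"
    using sphere_distr_moments_approx[of \<eta> m P] \<delta> m by (auto simp: \<eta>_def)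
  have "\<bar>expect Q (\<lambda>u. exp (dinner d u x)) - F d (dnorm d x)\<bar> \<le> \<delta>" if x: "dnorm d x \<le> 1" for x
  proof -
    define a where "a p = (expect Q (\<lambda>u. dinner d u x ^ p) - sphere_moment d p (dnorm d x)) / fact p" for p
    have "a sums (expect Q (\<lambda>u. exp (dinner d u x)) - F d (dnorm d x))"
      unfolding a_def diff_divide_distrib by (intro sums_diff expect_exp_dinner_sums F_sums_sphere_moment d)
    moreover have "\<bar>a p\<bar> \<le> \<eta> / fact p" if "p < P" for p
      using Q_moments[OF x, of p] that by (simp add: a_def abs_divide divide_right_mono)
    moreover have "\<bar>a p\<bar> \<le> 2 / fact p" for p
    proof -
      have "dinner d x x \<le> 1" and "0 \<le> dnorm d x"
        using x by (simp_all add: dnorm_def dinner_self_nonneg)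
      then have "\<bar>expect Q (\<lambda>u. dinner d u x ^ p)\<bar> \<le> 1" "\<bar>sphere_moment d p (dnorm d x)\<bar> \<le> 1"
        using abs_expect_dinner_power_le_1[OF Q] abs_sphere_moment_le[of d p "dnorm d x"] power_le_one[of "dnorm d x" p] x d
        by auto
      then show ?thesis
        by (simp add: a_def abs_divide divide_right_mono)
    qed
    ultimately have "\<bar>expect Q (\<lambda>u. exp (dinner d u x)) - F d (dnorm d x)\<bar> \<le> \<eta> * exp 1 + 2 * (\<delta> / 4)"
      using abs_sums_le_split[of a _ P \<eta>] tail \<delta> by (smt (verit) \<eta>_def divide_nonneg_pos)
    also have "\<dots> \<le> \<delta>"
      using mult_left_mono[OF exp_le, of \<delta>] \<delta> unfolding \<eta>_def by linarith
    finally show ?thesis .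
  qed
  with Q show ?thesis
    by blast
qed

lemma sphere_points_exp_approx:
  assumes d: "d \<ge> 2" and \<delta>: "\<delta> > 0" and n: "n > 0"
  shows "\<exists>ws. length ws = n \<and> (\<forall>w\<in>set ws. dnorm d w = 1) \<and>
           (\<forall>x. dnorm d x \<le> 1 \<longrightarrow>
              \<bar>(\<Sum>w\<leftarrow>ws. exp (dinner d w x)) / real n - F d (dnorm d x)\<bar> \<le> \<delta> + exp 1 / sqrt (real n))"
proof -
  obtain Q where Q: "sphere_distr d Q"
    and QF: "\<And>x. dnorm d x \<le> 1 \<Longrightarrow> \<bar>expect Q (\<lambda>u. exp (dinner d u x)) - F d (dnorm d x)\<bar> \<le> \<delta>"
    using sphere_distr_exp_approx[OF d \<delta>] by auto
  then have Q_distr: "distr_list Q" and Q_sphere: "\<And>p. p \<in> set Q \<Longrightarrow> dinner d (snd p) (snd p) = 1"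
    by (auto simp: sphere_distr_def)
  then obtain ws where ws: "length ws = n" "set ws \<subseteq> snd ` set Q"
    and herd: "\<And>x. \<bar>(\<Sum>w\<leftarrow>ws. exp (dinner d w x)) / real n - expect Q (\<lambda>u. exp (dinner d u x))\<bar>
                \<le> sqrt (exp 1 * exp (dinner d x x) / real n)"
    using kernel_herding_uniform[OF psd_kernel_exp_dinner[of d] Q_distr, where K = "exp 1" and n = n] n
    by auto
  have "\<bar>(\<Sum>w\<leftarrow>ws. exp (dinner d w x)) / real n - F d (dnorm d x)\<bar> \<le> \<delta> + exp 1 / sqrt (real n)"
    if x: "dnorm d x \<le> 1" for x
  proof -
    have "sqrt (exp 1 * exp (dinner d x x) / real n) \<le> sqrt (exp 1 * exp 1 / real n)"
      using x by (simp add: dnorm_def divide_right_mono)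
    also have "\<dots> = exp 1 / sqrt (real n)"
      by (simp add: real_sqrt_divide real_sqrt_mult)
    finally show ?thesis
      using herd[of x] QF[OF x] by linarith
  qed
  moreover have "\<forall>w\<in>set ws. dnorm d w = 1"
    using ws Q_sphere by (force simp: dnorm_def)
  ultimately show ?thesis
    using ws by blast
qed

lemma exp_1_div_sqrt_le:
  assumes "\<epsilon> > 0"
  shows "exp 1 / sqrt (real (nat \<lceil>36 / \<epsilon>\<^sup>2\<rceil>)) \<le> \<epsilon> / 2"
proof -
  have "6 / \<epsilon> \<le> sqrt (real (nat \<lceil>36 / \<epsilon>\<^sup>2\<rceil>))"
    using real_nat_ceiling_ge[of "36 / \<epsilon>\<^sup>2"] by (intro real_le_rsqrt) (simp add: power_divide)
  then have "exp 1 / sqrt (real (nat \<lceil>36 / \<epsilon>\<^sup>2\<rceil>)) \<le> 3 / (6 / \<epsilon>)"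
    using assms exp_le by (intro frac_le) auto
  then show ?thesis
    by simp
qed

lemma sum_nth_shift_eq_sum_list: "length ws = n \<Longrightarrow> (\<Sum>i=1..n. f (ws ! (i - 1))) = (\<Sum>w\<leftarrow>ws. f w)"
  using sum.atLeast1_atMost_eq[of "\<lambda>i. f (ws ! (i - 1))" n] by (simp add: sum_list_sum_nth atLeast0LessThan)

theorem theorem6:
  fixes \<epsilon> :: real and d :: nat
  assumes "\<epsilon> > 0" and "d \<ge> 2"
  shows "\<exists>(w :: nat \<Rightarrow> nat \<Rightarrow> real) (v :: nat \<Rightarrow> real).
           (let n = nat \<lceil>36 / \<epsilon>\<^sup>2\<rceil> in
             (\<forall>i\<in>{1..n}. dnorm d (w i) = 1 \<and> \<bar>v i\<bar> \<le> 1 / real n) \<and>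
             (\<forall>x. dnorm d x \<le> 1 \<longrightarrow>
                \<bar>(\<Sum>i=1..n. v i * exp (dinner d (w i) x)) - F d (dnorm d x)\<bar> \<le> \<epsilon>))"
proof -
  define n where "n = nat \<lceil>36 / \<epsilon>\<^sup>2\<rceil>"
  have "n > 0"
    using assms(1) by (simp add: n_def)
  then obtain ws where ws: "length ws = n" "\<forall>w\<in>set ws. dnorm d w = 1"
    and approx: "\<And>x. dnorm d x \<le> 1 \<Longrightarrow>
      \<bar>(\<Sum>w\<leftarrow>ws. exp (dinner d w x)) / real n - F d (dnorm d x)\<bar> \<le> \<epsilon> / 2 + exp 1 / sqrt (real n)"
    using sphere_points_exp_approx[OF assms(2), of "\<epsilon> / 2" n] assms(1) by auto
  have "\<bar>(\<Sum>i=1..n. 1 / real n * exp (dinner d (ws ! (i - 1)) x)) - F d (dnorm d x)\<bar> \<le> \<epsilon>"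
    if "dnorm d x \<le> 1" for x
  proof -
    have "(\<Sum>i=1..n. 1 / real n * exp (dinner d (ws ! (i - 1)) x)) = (\<Sum>w\<leftarrow>ws. exp (dinner d w x)) / real n"
      using sum_nth_shift_eq_sum_list[OF ws(1), of "\<lambda>w. exp (dinner d w x)"]
      by (simp add: sum_divide_distrib[symmetric])
    then show ?thesis
      using approx[OF that] exp_1_div_sqrt_le[OF assms(1), folded n_def] by linarith
  qed
  moreover have "dnorm d (ws ! (i - 1)) = 1" if "i \<in> {1..n}" for i
    using that ws by auto
  ultimately show ?thesis
    unfolding Let_def n_def[symmetric] by (intro exI[of _ "\<lambda>i. ws ! (i - 1)"] exI[of _ "\<lambda>i. 1 / real n"]) simp
qed

end
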